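(* Let $G=(V,E)$ be a graph. Then $V$ can be partitioned into three sets $V_1,V_2,V_3$ such that each $G[V_i]$ is a clique if and only if $G$ has three pairwise vertex-disjoint subgraphs $G_1,G_2,G_3$ with $\sum_{i=1}^3\mathrm{density}(G_i)\geq (|V|-3)/2$.
   Context: A subgraph means an induced subgraph $G[U]$ for a nonempty vertex set $U$. The density of a graph with vertex set $V'$ and edge set $E'$ is $|E'|/|V'|$. In the partition, each part is nonempty. *)

theory Defs
  imports Complex_Main
begin

definition simple_graph :: "'a set \<Rightarrow> 'a set set \<Rightarrow> bool" where
  "simple_graph V E \<longleftrightarrow> finite V \<and>
     (\<forall>e\<in>E. \<exists>u v. u \<in> V \<and> v \<in> V \<and> u \<noteq> v \<and> e = {u, v})"

definition induced_edges :: "'a set set \<Rightarrow> 'a set \<Rightarrow> 'a set set" where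
  "induced_edges E U = {e \<in> E. e \<subseteq> U}"

definition density :: "'a set set \<Rightarrow> 'a set \<Rightarrow> real" where
  "density E U = real (card (induced_edges E U)) / real (card U)"

definition is_clique :: "'a set set \<Rightarrow> 'a set \<Rightarrow> bool" where
  "is_clique E U \<longleftrightarrow> (\<forall>u\<in>U. \<forall>v\<in>U. u \<noteq> v \<longrightarrow> {u, v} \<in> E)"

end

theory Submission
  imports Defs
begin

text \<open>
  A nonempty vertex set U spans at most (|U| choose 2) edges, so its density is at most
  (|U| - 1)/2, with equality exactly when U is a clique. Hence k disjoint nonempty subsets
  of V have total density at most (|U1| + ... + |Uk| - k)/2, which is at most (|V| - k)/2.
  Reaching (|V| - k)/2 forces equality at every step: the sets cover V and each of them
  is a clique.
\<close>

lemma of_nat_choose_two: "real (n choose 2) = real n * (real n - 1) / 2"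
  by (induction n) (simp_all add: numeral_2_eq_2 field_simps)

lemma induced_edges_subset_doubletons:
  assumes "simple_graph V E"
  shows "induced_edges E U \<subseteq> {e. e \<subseteq> U \<and> card e = 2}"
  using assms unfolding simple_graph_def induced_edges_def by fastforce

lemma is_clique_iff_induced_edges_eq_doubletons:
  assumes "simple_graph V E"
  shows "is_clique E U \<longleftrightarrow> induced_edges E U = {e. e \<subseteq> U \<and> card e = 2}"
proof
  assume "is_clique E U"
  then have "{e. e \<subseteq> U \<and> card e = 2} \<subseteq> induced_edges E U"
    by (auto simp: card_2_iff is_clique_def induced_edges_def)
  then show "induced_edges E U = {e. e \<subseteq> U \<and> card e = 2}"
    using induced_edges_subset_doubletons[OF assms] by blast
next
  assume "induced_edges E U = {e. e \<subseteq> U \<and> card e = 2}"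
  then show "is_clique E U"
    unfolding is_clique_def induced_edges_def by (auto simp: set_eq_iff card_2_iff)
qed

lemma card_induced_edges_le:
  assumes "simple_graph V E" "finite U"
  shows "card (induced_edges E U) \<le> card U choose 2"
proof -
  have "card (induced_edges E U) \<le> card {e. e \<subseteq> U \<and> card e = 2}"
    using assms by (intro card_mono induced_edges_subset_doubletons) auto
  then show ?thesis
    by (simp add: n_subsets[OF assms(2)])
qed

lemma card_induced_edges_eq_iff_clique:
  assumes "simple_graph V E" "finite U"
  shows "card (induced_edges E U) = card U choose 2 \<longleftrightarrow> is_clique E U"
proof -
  have "card (induced_edges E U) = card {e. e \<subseteq> U \<and> card e = 2}
      \<longleftrightarrow> induced_edges E U = {e. e \<subseteq> U \<and> card e = 2}"
    using assms(2) card_subset_eq[OF _ induced_edges_subset_doubletons[OF assms(1)]] by fastforce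
  then show ?thesis
    by (simp add: n_subsets[OF assms(2)] is_clique_iff_induced_edges_eq_doubletons[OF assms(1)])
qed

lemma card_minus_one_half_eq_choose_two_div_card:
  assumes "finite U" "U \<noteq> {}"
  shows "(real (card U) - 1) / 2 = real (card U choose 2) / real (card U)"
  using assms by (simp add: of_nat_choose_two)

lemma density_le:
  assumes "simple_graph V E" "finite U" "U \<noteq> {}"
  shows "density E U \<le> (real (card U) - 1) / 2"
  unfolding card_minus_one_half_eq_choose_two_div_card[OF assms(2,3)] density_def
  by (intro divide_right_mono) (simp_all add: card_induced_edges_le[OF assms(1,2)])

lemma density_eq_iff_clique:
  assumes "simple_graph V E" "finite U" "U \<noteq> {}"
  shows "density E U = (real (card U) - 1) / 2 \<longleftrightarrow> is_clique E U"
  unfolding card_minus_one_half_eq_choose_two_div_card[OF assms(2,3)] density_def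
  using assms(2,3) card_induced_edges_eq_iff_clique[OF assms(1,2)] by simp

lemma sum_half_card_minus_one:
  assumes "finite P" "pairwise disjnt P" "\<And>U. U \<in> P \<Longrightarrow> finite U"
  shows "(\<Sum>U\<in>P. (real (card U) - 1) / 2) = (real (card (\<Union>P)) - real (card P)) / 2"
  using assms by (simp add: card_Union_disjoint sum_subtractf sum_divide_distrib diff_divide_distrib)

lemma sum_density_ge_iff_clique_partition:
  assumes "simple_graph V E" "finite P" "pairwise disjnt P" "{} \<notin> P" "\<Union>P \<subseteq> V"
  shows "(real (card V) - real (card P)) / 2 \<le> (\<Sum>U\<in>P. density E U)
     \<longleftrightarrow> \<Union>P = V \<and> (\<forall>U\<in>P. is_clique E U)"
proof -
  have "finite V"
    using assms(1) by (simp add: simple_graph_def)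
  then have fin: "finite U" if "U \<in> P" for U
    using that assms(5) by (meson Sup_upper finite_subset subset_trans)
  have nonempty: "U \<noteq> {}" if "U \<in> P" for U
    using that assms(4) by auto
  define slack where "slack U = (real (card U) - 1) / 2 - density E U" for U
  have slack_nonneg: "\<forall>U\<in>P. slack U \<ge> 0"
    using density_le[OF assms(1) fin nonempty] by (simp add: slack_def)
  have sum_slack: "(\<Sum>U\<in>P. density E U)
      = (real (card (\<Union>P)) - real (card P)) / 2 - (\<Sum>U\<in>P. slack U)"
    using sum_half_card_minus_one[OF assms(2,3) fin] by (simp add: slack_def sum_subtractf)
  have card_le: "card (\<Union>P) \<le> card V" and card_eq: "card (\<Union>P) = card V \<longleftrightarrow> \<Union>P = V"
    using \<open>finite V\<close> assms(5) card_mono card_subset_eq by blast+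
  have "(\<Sum>U\<in>P. slack U) \<ge> 0"
    using slack_nonneg by (simp add: sum_nonneg)
  moreover have "real (card (\<Union>P)) \<le> real (card V)"
    using card_le by simp
  ultimately have "(real (card V) - real (card P)) / 2 \<le> (\<Sum>U\<in>P. density E U)
      \<longleftrightarrow> real (card (\<Union>P)) = real (card V) \<and> (\<Sum>U\<in>P. slack U) = 0"
    unfolding sum_slack by argo
  also have "\<dots> \<longleftrightarrow> \<Union>P = V \<and> (\<Sum>U\<in>P. slack U) = 0"
    using card_eq by (simp only: of_nat_eq_iff)
  also have "(\<Sum>U\<in>P. slack U) = 0 \<longleftrightarrow> (\<forall>U\<in>P. slack U = 0)"
    using sum_nonneg_eq_0_iff[OF assms(2)] slack_nonneg by blast
  also have "\<dots> \<longleftrightarrow> (\<forall>U\<in>P. is_clique E U)"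
    using density_eq_iff_clique[OF assms(1) fin nonempty] by (auto simp: slack_def)
  finally show ?thesis .
qed

lemma three_disjoint_nonempty_sets:
  assumes "A \<noteq> {}" "B \<noteq> {}" "C \<noteq> {}" "A \<inter> B = {}" "A \<inter> C = {}" "B \<inter> C = {}"
  shows "card {A, B, C} = 3" "pairwise disjnt {A, B, C}" "{} \<notin> {A, B, C}"
    "sum f {A, B, C} = f A + f B + f C"
proof -
  have "A \<noteq> B" "A \<noteq> C" "B \<noteq> C"
    using assms by auto
  then show "card {A, B, C} = 3" "sum f {A, B, C} = f A + f B + f C"
    by (simp_all add: add.assoc)
  show "pairwise disjnt {A, B, C}" "{} \<notin> {A, B, C}"
    using assms by (auto simp: pairwise_insert disjnt_def Int_commute)
qed

theorem lemma5:
  fixes V :: "'a set" and E :: "'a set set"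
  assumes "simple_graph V E"
  shows "(\<exists>V1 V2 V3. V1 \<noteq> {} \<and> V2 \<noteq> {} \<and> V3 \<noteq> {} \<and>
            V1 \<union> V2 \<union> V3 = V \<and>
            V1 \<inter> V2 = {} \<and> V1 \<inter> V3 = {} \<and> V2 \<inter> V3 = {} \<and>
            is_clique E V1 \<and> is_clique E V2 \<and> is_clique E V3)
     \<longleftrightarrow>
         (\<exists>U1 U2 U3. U1 \<noteq> {} \<and> U2 \<noteq> {} \<and> U3 \<noteq> {} \<and>
            U1 \<subseteq> V \<and> U2 \<subseteq> V \<and> U3 \<subseteq> V \<and>
            U1 \<inter> U2 = {} \<and> U1 \<inter> U3 = {} \<and> U2 \<inter> U3 = {} \<and>
            density E U1 + density E U2 + density E U3 \<ge> (real (card V) - 3) / 2)"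
proof -
  have three_parts: "(real (card V) - 3) / 2 \<le> density E U1 + density E U2 + density E U3
      \<longleftrightarrow> U1 \<union> U2 \<union> U3 = V \<and> is_clique E U1 \<and> is_clique E U2 \<and> is_clique E U3"
    if "U1 \<noteq> {}" "U2 \<noteq> {}" "U3 \<noteq> {}" "U1 \<inter> U2 = {}" "U1 \<inter> U3 = {}" "U2 \<inter> U3 = {}"
      "U1 \<union> U2 \<union> U3 \<subseteq> V" for U1 U2 U3
  proof -
    note parts = three_disjoint_nonempty_sets[OF that(1-6)]
    have "\<Union>{U1, U2, U3} \<subseteq> V"
      using that(7) by simp
    from sum_density_ge_iff_clique_partition[OF assms _ parts(2,3) this] show ?thesis
      using parts(1) parts(4)[of "density E"] by (simp add: Un_assoc)
  qed
  show ?thesis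
    apply (intro iffI; elim exE conjE)
    subgoal for V1 V2 V3
      using three_parts[of V1 V2 V3] by (intro exI[of _ V1] exI[of _ V2] exI[of _ V3]) auto
    subgoal for U1 U2 U3
      using three_parts[of U1 U2 U3] by (intro exI[of _ U1] exI[of _ U2] exI[of _ U3]) auto
    done
qed

end
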